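(* Let $X$ be a compact metric space, $f\colon X\to X$ continuous, and $n\in\mathbb N$. Then $$\mathrm{Per}(f^{(n)})=\{[m_1,\dots,m_n]: m_i\in\mathrm{Per}(f)\ \text{for all}\ 1\le i\le n\},$$ $$\mathrm{Per}(f_n)=\bigcup_{l=1}^{n}\Big\{[d_1,\dots,d_l]: d_i\mid m_i\in\mathrm{Per}(f)\ \text{for all}\ 1\le i\le l,\ \text{and}\ \tfrac{m_1}{d_1}+\dots+\tfrac{m_l}{d_l}\le n\Big\},$$ $$\mathrm{Per}(f^{<\omega})=\bigcup_{l=1}^{\infty}\{[d_1,\dots,d_l]: d_i\mid m_i\in\mathrm{Per}(f)\ \text{for all}\ 1\le i\le l\},$$ where $[k_1,\dots,k_l]$ denotes the least common multiple of $k_1,\dots,k_l$.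
   Context: For a map $g$, $\mathrm{Per}(g)$ is the set of fundamental (least) periods of periodic points of $g$. $X^{(n)}$ is the $n$-fold Cartesian product $X\times\dots\times X$ and $f^{(n)}(x_1,\dots,x_n)=(f(x_1),\dots,f(x_n))$. $F_n(X)$ is the set of nonempty subsets of $X$ with at most $n$ points and $F(X)=\bigcup_{n\ge1}F_n(X)$ is the set of nonempty finite subsets of $X$; $f_n$ and $f^{<\omega}$ are the restrictions of the induced map $C\mapsto f(C)$ to $F_n(X)$ and $F(X)$ respectively. *)

theory Defs
  imports "HOL-Analysis.Analysis"
begin

definition least_period :: "('a \<Rightarrow> 'a) \<Rightarrow> 'a \<Rightarrow> nat \<Rightarrow> bool" where
  "least_period g x p \<longleftrightarrow> p > 0 \<and> (g ^^ p) x = x \<and> (\<forall>k. 0 < k \<and> k < p \<longrightarrow> (g ^^ k) x \<noteq> x)"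

definition Per :: "('a \<Rightarrow> 'a) \<Rightarrow> 'a set \<Rightarrow> nat set" where
  "Per g S = {p. \<exists>x\<in>S. least_period g x p}"

text \<open>n-fold product X^(n), points represented as lists of length n; f^(n) = map f.\<close>
definition prod_space :: "'a set \<Rightarrow> nat \<Rightarrow> 'a list set" where
  "prod_space X n = {xs. length xs = n \<and> set xs \<subseteq> X}"

definition Fn :: "'a set \<Rightarrow> nat \<Rightarrow> 'a set set" where
  "Fn X n = {C. C \<noteq> {} \<and> C \<subseteq> X \<and> finite C \<and> card C \<le> n}"

definition Ffin :: "'a set \<Rightarrow> 'a set set" where
  "Ffin X = {C. C \<noteq> {} \<and> C \<subseteq> X \<and> finite C}"

definition induced :: "('a \<Rightarrow> 'b) \<Rightarrow> 'a set \<Rightarrow> 'b set" where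
  "induced f C = f ` C"

end

theory Submission
  imports Defs "HOL-Combinatorics.Orbits"
begin

text \<open>
  A point of \<open>X\<^sup>n\<close> is fixed by \<open>f\<^sup>k\<close> iff each coordinate is, so its least period is the
  lcm of the periods of its coordinates.

  A finite set \<open>C\<close> with \<open>f\<^sup>p(C) = C\<close> consists of periodic points, hence is the disjoint
  union of its intersections with finitely many periodic orbits. These orbits are
  \<open>f\<close>-invariant and pairwise disjoint, so \<open>C\<close> is fixed by \<open>f\<^sup>k\<close> iff every piece is, and the
  period of \<open>C\<close> is the lcm of the periods \<open>d\<close> of its pieces. A piece of an orbit of length
  \<open>m\<close> has a period \<open>d\<close> dividing \<open>m\<close> and contains the \<open>m/d\<close> points \<open>f\<^bsup>jd\<^esup>(c)\<close>, \<open>j < m/d\<close>.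
  Conversely, these \<open>m/d\<close> points form a set of period exactly \<open>d\<close>. Pairs \<open>(d\<^sub>i, m\<^sub>i)\<close> with the
  same \<open>m\<^sub>i\<close> are realised inside one orbit, using the lcm of their \<open>d\<^sub>i\<close>, since \<open>X\<close> may
  have a single orbit of that length; this does not increase \<open>\<Sum> m\<^sub>i/d\<^sub>i\<close>.
\<close>

section \<open>Least periods\<close>

lemma least_period_iff:
  "least_period g x p \<longleftrightarrow> 0 < p \<and> (\<forall>k. (g ^^ k) x = x \<longleftrightarrow> p dvd k)"
proof
  assume "least_period g x p"
  then have p: "0 < p" "(g ^^ p) x = x"
    and min: "\<And>k. 0 < k \<Longrightarrow> k < p \<Longrightarrow> (g ^^ k) x \<noteq> x"
    unfolding least_period_def by auto
  have "(g ^^ k) x = x \<longleftrightarrow> (g ^^ (k mod p)) x = x" for k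
    using funpow_mod_eq[OF p(2)] by simp
  moreover have "(g ^^ (k mod p)) x = x \<longleftrightarrow> k mod p = 0" for k
    using min[of "k mod p"] p(1) by fastforce
  ultimately show "0 < p \<and> (\<forall>k. (g ^^ k) x = x \<longleftrightarrow> p dvd k)"
    using p(1) by (simp add: dvd_eq_mod_eq_0)
next
  assume "0 < p \<and> (\<forall>k. (g ^^ k) x = x \<longleftrightarrow> p dvd k)"
  then show "least_period g x p"
    unfolding least_period_def by (auto dest: dvd_imp_le)
qed

lemma least_period_unique: "least_period g x p \<Longrightarrow> least_period g x q \<Longrightarrow> p = q"
  unfolding least_period_iff by (metis dvd_antisym dvd_refl)

lemma least_period_pos: "least_period g x p \<Longrightarrow> 0 < p"
  unfolding least_period_def by simp

lemma Per_pos: "p \<in> Per g S \<Longrightarrow> 0 < p"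
  unfolding Per_def by (auto dest: least_period_pos)

lemma periodic_imp_least_period:
  assumes "(g ^^ p) x = x" "0 < p"
  shows "\<exists>q. least_period g x q"
proof -
  obtain q where "0 < q \<and> (g ^^ q) x = x" "\<forall>k<q. \<not> (0 < k \<and> (g ^^ k) x = x)"
    using exists_least_iff[of "\<lambda>q. 0 < q \<and> (g ^^ q) x = x"] assms by blast
  then show ?thesis
    unfolding least_period_def by blast
qed

lemma least_period_LcmI:
  assumes "finite A" "0 \<notin> A" "\<And>k. (g ^^ k) x = x \<longleftrightarrow> (\<forall>a\<in>A. a dvd k)"
  shows "least_period g x (Lcm A)"
  unfolding least_period_iff
  using assms Lcm_0_iff[OF assms(1)] by (auto simp: Lcm_dvd_iff simp del: Lcm_0_iff_nat)

section \<open>Products\<close>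

lemma funpow_map:
  fixes f :: "'a \<Rightarrow> 'a"
  shows "(map f ^^ k) xs = map (f ^^ k) xs"
  by (induction k) simp_all

lemma least_period_map:
  assumes "length ms = length xs" "\<And>i. i < length xs \<Longrightarrow> least_period f (xs ! i) (ms ! i)"
  shows "least_period (map f) xs (Lcm (set ms))"
proof (rule least_period_LcmI)
  show "0 \<notin> set ms"
    using assms by (auto simp: in_set_conv_nth dest: least_period_pos)
  have "(map f ^^ k) xs = xs \<longleftrightarrow> (\<forall>i<length xs. (f ^^ k) (xs ! i) = xs ! i)" for k
    by (simp add: funpow_map list_eq_iff_nth_eq)
  also have "\<dots>k \<longleftrightarrow> (\<forall>i<length xs. ms ! i dvd k)" for k
    using assms(2) by (simp add: least_period_iff)
  finally show "(map f ^^ k) xs = xs \<longleftrightarrow> (\<forall>a\<in>set ms. a dvd k)" for k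
    using assms(1) by (simp add: all_set_conv_all_nth)
qed simp

lemma Per_map_prod_space:
  "Per (map f) (prod_space X n) = {Lcm (set ms) | ms. length ms = n \<and> set ms \<subseteq> Per f X}"
proof (intro set_eqI iffI)
  fix p assume "p \<in> Per (map f) (prod_space X n)"
  then obtain xs where xs: "length xs = n" "set xs \<subseteq> X" and p: "least_period (map f) xs p"
    unfolding Per_def prod_space_def by auto
  define q where "q i = (SOME m. least_period f (xs ! i) m)" for i
  have q: "least_period f (xs ! i) (q i)" if "i < length xs" for i
    unfolding q_def
  proof (rule someI_ex, rule periodic_imp_least_period)
    show "(f ^^ p) (xs ! i) = xs ! i"
      using p that by (simp add: least_period_def funpow_map list_eq_iff_nth_eq)
  qed (rule least_period_pos[OF p])
  define ms where "ms = map q [0..<length xs]"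
  have "least_period (map f) xs (Lcm (set ms))"
    by (rule least_period_map) (simp_all add: ms_def q)
  then have "p = Lcm (set ms)"
    using p by (rule least_period_unique[rotated])
  moreover have "set ms \<subseteq> Per f X"
    using q xs(2) by (force simp: ms_def Per_def)
  moreover have "length ms = n"
    using xs(1) by (simp add: ms_def)
  ultimately show "p \<in> {Lcm (set ms) | ms. length ms = n \<and> set ms \<subseteq> Per f X}"
    by (intro CollectI exI[of _ ms]) simp
next
  fix p assume "p \<in> {Lcm (set ms) | ms. length ms = n \<and> set ms \<subseteq> Per f X}"
  then obtain ms where ms: "p = Lcm (set ms)" "length ms = n" "set ms \<subseteq> Per f X"
    by auto
  define y where "y m = (SOME x. x \<in> X \<and> least_period f x m)" for m
  have y: "y m \<in> X \<and> least_period f (y m) m" if "m \<in> set ms" for m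
    unfolding y_def by (rule someI_ex) (use ms(3) that in \<open>auto simp: Per_def\<close>)
  have "least_period (map f) (map y ms) p"
    unfolding ms(1) by (rule least_period_map) (simp_all add: y)
  moreover have "map y ms \<in> prod_space X n"
    using ms(2) y by (auto simp: prod_space_def)
  ultimately show "p \<in> Per (map f) (prod_space X n)"
    unfolding Per_def by blast
qed

section \<open>Finite sets under the induced map\<close>

lemma funpow_induced:
  fixes f :: "'a \<Rightarrow> 'a"
  shows "(induced f ^^ k) C = (f ^^ k) ` C"
  by (induction k) (simp_all add: induced_def image_comp)

lemma finite_invariant_set_periodic:
  assumes "finite C" "g ` C = C" "c \<in> C"
  shows "\<exists>j>0. (g ^^ j) c = c"
proof -
  have "inj_on g C"
    using assms(1,2) by (simp add: eq_card_imp_inj_on)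
  then have bij: "bij_betw (g ^^ i) C C" for i
    using assms(2) by (intro bij_betw_funpow) (simp add: bij_betw_def)
  then have "range (\<lambda>k. (g ^^ k) c) \<subseteq> C"
    using assms(3) by (auto simp: bij_betw_def)
  then have "\<not> inj (\<lambda>k. (g ^^ k) c)"
    using assms(1) finite_imageD finite_subset infinite_UNIV_nat by blast
  then obtain i j where ij: "i < j" "(g ^^ i) c = (g ^^ j) c"
    unfolding inj_def by (metis linorder_neqE_nat)
  have "(g ^^ i) ((g ^^ (j - i)) c) = (g ^^ j) c"
    using ij(1) funpow_add[of i "j - i" g] by simp
  moreover have "(g ^^ (j - i)) c \<in> C"
    using bij assms(3) by (auto simp: bij_betw_def)
  ultimately have "(g ^^ (j - i)) c = c"
    using bij[of i] ij(2) assms(3) by (auto simp: bij_betw_def inj_on_def)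
  then show ?thesis
    using ij(1) by (intro exI[of _ "j - i"]) simp
qed

lemma least_period_induced_mem:
  assumes "finite C" "least_period (induced f) C p" "c \<in> C"
  shows "\<exists>m. least_period f c m"
proof -
  have "(f ^^ p) ` C = C" "0 < p"
    using assms(2) by (simp_all add: least_period_def funpow_induced)
  then obtain j where "0 < j" "((f ^^ p) ^^ j) c = c"
    using finite_invariant_set_periodic assms(1,3) by metis
  then show ?thesis
    using \<open>0 < p\<close> by (intro periodic_imp_least_period[of "p * j"]) (simp_all add: funpow_mult)
qed

lemma image_UN_fixed_iff:
  assumes sub: "\<And>i. i \<in> I \<Longrightarrow> P i \<subseteq> Q i"
    and inv: "\<And>i y. i \<in> I \<Longrightarrow> y \<in> Q i \<Longrightarrow> h y \<in> Q i"
    and disj: "\<And>i j. i \<in> I \<Longrightarrow> j \<in> I \<Longrightarrow> i \<noteq> j \<Longrightarrow> Q i \<inter> Q j = {}"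
  shows "h ` (\<Union>i\<in>I. P i) = (\<Union>i\<in>I. P i) \<longleftrightarrow> (\<forall>i\<in>I. h ` P i = P i)"
proof
  assume fixed: "h ` (\<Union>i\<in>I. P i) = (\<Union>i\<in>I. P i)"
  have same_piece: "j = i" if "i \<in> I" "j \<in> I" "y \<in> P i" "h y \<in> P j" for i j y
  proof (rule ccontr)
    assume "j \<noteq> i"
    moreover have "h y \<in> Q i"
      using inv[OF that(1)] sub[OF that(1)] that(3) by blast
    moreover have "h y \<in> Q j"
      using sub[OF that(2)] that(4) by blast
    ultimately show False
      using disj[OF that(2,1)] by blast
  qed
  show "\<forall>i\<in>I. h ` P i = P i"
  proof (intro ballI equalityI subsetI)
    fix i z assume i: "i \<in> I"
    {
      assume "z \<in> h ` P i"
      then obtain y where y: "y \<in> P i" "z = h y"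
        by blast
      then have "z \<in> (\<Union>i\<in>I. P i)"
        using fixed i by blast
      then obtain j where "j \<in> I" "z \<in> P j"
        by blast
      then show "z \<in> P i"
        using same_piece i y by blast
    next
      assume z: "z \<in> P i"
      then have "z \<in> h ` (\<Union>i\<in>I. P i)"
        using fixed i by blast
      then obtain j y where "j \<in> I" "y \<in> P j" "z = h y"
        by blast
      then show "z \<in> h ` P i"
        using same_piece i z by blast
    }
  qed
qed (simp add: image_UN)

lemma cyclic_on_disjoint: "cyclic_on f A \<Longrightarrow> cyclic_on f B \<Longrightarrow> A \<noteq> B \<Longrightarrow> A \<inter> B = {}"
  by (metis disjoint_iff orbit_cyclic_eq3)

lemma least_period_self_in_orbit: "least_period f c m \<Longrightarrow> c \<in> orbit f c"
  unfolding least_period_def orbit_altdef by (metis (mono_tags) mem_Collect_eq)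

lemma funpow_fixed_on_orbit:
  assumes "(f ^^ k) c = c" "y \<in> orbit f c"
  shows "(f ^^ k) y = y"
proof -
  obtain n where "y = (f ^^ n) c"
    using assms(2) by (auto simp: orbit_altdef)
  then show ?thesis
    using assms(1) by (metis add.commute comp_apply funpow_add)
qed

lemma least_period_cyclic_on_orbit: "least_period f c m \<Longrightarrow> cyclic_on f (orbit f c)"
  by (rule cyclic_on_singleI[OF least_period_self_in_orbit]) simp_all

lemma card_orbit_least_period:
  assumes "least_period f c m"
  shows "card (orbit f c) = m"
proof -
  have "orbit f c = (\<lambda>k. (f ^^ k) c) ` {0..<m}"
    using assms by (auto simp: least_period_def orbit_altdef_bounded)
  moreover have "inj_on (\<lambda>k. (f ^^ k) c) {0..<m}"
    using assms by (intro inj_on_funpow_least) (auto simp: least_period_def)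
  ultimately show ?thesis
    by (simp add: card_image)
qed

lemma funpow_image_UN_cyclic_fixed_iff:
  assumes cyclic: "\<And>i. i \<in> I \<Longrightarrow> cyclic_on f (Q i)" and inj: "inj_on Q I"
    and sub: "\<And>i. i \<in> I \<Longrightarrow> P i \<subseteq> Q i"
  shows "(f ^^ k) ` (\<Union>i\<in>I. P i) = (\<Union>i\<in>I. P i) \<longleftrightarrow> (\<forall>i\<in>I. (f ^^ k) ` P i = P i)"
proof (rule image_UN_fixed_iff[where Q = Q])
  show "(f ^^ k) y \<in> Q i" if "i \<in> I" "y \<in> Q i" for i y
    using cyclic_on_funpow_in[OF cyclic[OF that(1)] that(2)] .
  show "Q i \<inter> Q j = {}" if "i \<in> I" "j \<in> I" "i \<noteq> j" for i j
    using cyclic_on_disjoint[OF cyclic[OF that(1)] cyclic[OF that(2)]] inj_onD[OF inj _ that(1,2)] that(3)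
    by blast
qed (rule sub)

lemma least_period_induced_UN:
  assumes "finite I" and cyclic: "\<And>i. i \<in> I \<Longrightarrow> cyclic_on f (Q i)" and inj: "inj_on Q I"
    and sub: "\<And>i. i \<in> I \<Longrightarrow> P i \<subseteq> Q i"
    and period: "\<And>i. i \<in> I \<Longrightarrow> least_period (induced f) (P i) (p i)"
  shows "least_period (induced f) (\<Union>i\<in>I. P i) (Lcm (p ` I))"
proof (rule least_period_LcmI)
  show "finite (p ` I)"
    using assms(1) by simp
  show "0 \<notin> p ` I"
    using period by (force dest: least_period_pos)
  show "(induced f ^^ k) (\<Union>i\<in>I. P i) = (\<Union>i\<in>I. P i) \<longleftrightarrow> (\<forall>a\<in>p ` I. a dvd k)" for k
    using period
    by (simp add: funpow_induced funpow_image_UN_cyclic_fixed_iff[OF cyclic inj sub] least_period_iff)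
qed

lemma least_period_induced_in_orbit:
  assumes c: "least_period f c m" and S: "c \<in> S" "S \<subseteq> orbit f c" "finite S"
    and d: "least_period (induced f) S d"
  shows "d dvd m" and "m div d \<le> card S"
proof -
  have "(f ^^ m) y = y" if "y \<in> S" for y
    using c S(2) that by (auto simp: least_period_def intro: funpow_fixed_on_orbit[of m f c])
  then have "(f ^^ m) ` S = S"
    by (metis (no_types) image_cong image_ident)
  then show "d dvd m"
    using d by (simp add: least_period_iff funpow_induced)
  have d_pos: "0 < d" and S_fixed: "(f ^^ d) ` S = S"
    using d by (simp_all add: least_period_def funpow_induced)
  have in_S: "(f ^^ (j * d)) c \<in> S" for j
  proof (induction j)
    case (Suc j)
    have "(f ^^ (Suc j * d)) c = (f ^^ d) ((f ^^ (j * d)) c)"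
      by (simp add: funpow_add)
    then show ?case
      using Suc S_fixed by (metis image_eqI)
  qed (use S(1) in simp)
  have below_m: "j * d < m" if "j < m div d" for j
    using that d_pos less_eq_div_iff_mult_less_eq[of d "Suc j" m] by simp
  have "inj_on (\<lambda>k. (f ^^ k) c) {0..<m}"
    using c by (intro inj_on_funpow_least) (auto simp: least_period_def)
  then have "inj_on (\<lambda>j. (f ^^ (j * d)) c) {..<m div d}"
    using below_m d_pos unfolding inj_on_def by (metis atLeastLessThan_iff lessThan_iff mult_right_cancel not_gr0 zero_le)
  then show "m div d \<le> card S"
    using card_inj_on_le[of _ "{..<m div d}" S] in_S S(3) by auto
qed

lemma induced_least_period_decomposition:
  fixes f :: "'a \<Rightarrow> 'a"
  assumes C: "finite C" "C \<noteq> {}" "C \<subseteq> X" and p: "least_period (induced f) C p"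
  obtains \<O> :: "'a set set" and d where "finite \<O>" "\<O> \<noteq> {}" "card \<O> \<le> card C"
    "p = Lcm (d ` \<O>)" "\<And>B. B \<in> \<O> \<Longrightarrow> d B dvd card B \<and> card B \<in> Per f X"
    "(\<Sum>B\<in>\<O>. card B div d B) \<le> card C"
proof -
  define m where "m c = (SOME m. least_period f c m)" for c
  have m: "least_period f c (m c)" if "c \<in> C" for c
    unfolding m_def by (rule someI_ex) (rule least_period_induced_mem[OF C(1) p that])
  define \<O> where "\<O> = orbit f ` C"
  have cyclic: "cyclic_on f B" if "B \<in> \<O>" for B
    using that least_period_cyclic_on_orbit[OF m] by (auto simp: \<O>_def)
  have C_eq: "C = (\<Union>B\<in>\<O>. C \<inter> B)"
    using least_period_self_in_orbit[OF m] by (auto simp: \<O>_def)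
  have pieces_fixed_iff: "(f ^^ k) ` C = C \<longleftrightarrow> (\<forall>B\<in>\<O>. (f ^^ k) ` (C \<inter> B) = C \<inter> B)" for k
    by (subst (1 2) C_eq, rule funpow_image_UN_cyclic_fixed_iff[where Q = id]) (simp_all add: cyclic)
  have p_fixed: "(f ^^ p) ` C = C" and p_pos: "0 < p"
    using p by (simp_all add: least_period_def funpow_induced)
  define d where "d B = (SOME e. least_period (induced f) (C \<inter> B) e)" for B
  have d: "least_period (induced f) (C \<inter> B) (d B)" if "B \<in> \<O>" for B
    unfolding d_def
  proof (rule someI_ex, rule periodic_imp_least_period)
    show "(induced f ^^ p) (C \<inter> B) = C \<inter> B"
      using pieces_fixed_iff p_fixed that by (simp add: funpow_induced)
  qed (rule p_pos)
  have "least_period (induced f) C (Lcm (d ` \<O>))"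
    using C(1) by (subst C_eq, intro least_period_induced_UN[where Q = id]) (simp_all add: \<O>_def cyclic d)
  then have "p = Lcm (d ` \<O>)"
    using p by (rule least_period_unique[rotated])
  moreover have piece: "d B dvd card B \<and> card B \<in> Per f X \<and> card B div d B \<le> card (C \<inter> B)"
    if B: "B \<in> \<O>" for B
  proof -
    obtain c where c: "c \<in> C" "B = orbit f c"
      using B by (auto simp: \<O>_def)
    have card_B: "card B = m c"
      using card_orbit_least_period[OF m[OF c(1)]] c(2) by simp
    moreover have "card B \<in> Per f X"
      using m[OF c(1)] c(1) C(3) unfolding Per_def card_B by blast
    moreover have "d B dvd m c" "m c div d B \<le> card (C \<inter> B)"
      using least_period_induced_in_orbit[OF m[OF c(1)] _ _ _ d[OF B]] c C(1)
        least_period_self_in_orbit[OF m[OF c(1)]]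
      by auto
    ultimately show ?thesis
      by simp
  qed
  moreover have "(\<Sum>B\<in>\<O>. card B div d B) \<le> card C"
  proof -
    have "(\<Sum>B\<in>\<O>. card B div d B) \<le> (\<Sum>B\<in>\<O>. card (C \<inter> B))"
      using piece by (intro sum_mono) simp
    also have "\<dots> = card C"
      using C(1) cyclic_on_disjoint[OF cyclic cyclic]
      by (subst (2) C_eq, subst card_UN_disjoint) (auto simp: \<O>_def)
    finally show ?thesis .
  qed
  moreover have "finite \<O>" "\<O> \<noteq> {}" "card \<O> \<le> card C"
    using C(1,2) by (simp_all add: \<O>_def card_image_le)
  ultimately show ?thesis
    using that by blast
qed

lemma funpow_mult_mod_period:
  assumes "least_period f x m" "d dvd m"
  shows "(f ^^ (j * d)) x = (f ^^ ((j mod (m div d)) * d)) x"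
proof -
  have "(f ^^ (j * d)) x = (f ^^ ((j * d) mod m)) x"
    using assms(1) funpow_mod_eq[of m f x "j * d"] by (simp add: least_period_def)
  also have "(j * d) mod m = (j mod (m div d)) * d"
    using assms(2) mod_mult_mult2[of j d "m div d"] by simp
  finally show ?thesis .
qed

lemma funpow_mult_image_eq_range:
  assumes "least_period f x m" "d dvd m" "0 < d"
  shows "(\<lambda>j. (f ^^ (j * d)) x) ` {..<m div d} = range (\<lambda>j. (f ^^ (j * d)) x)"
proof
  have "0 < m div d"
    using assms(2,3) least_period_pos[OF assms(1)] by (simp add: div_greater_zero_iff dvd_imp_le)
  show "range (\<lambda>j. (f ^^ (j * d)) x) \<subseteq> (\<lambda>j. (f ^^ (j * d)) x) ` {..<m div d}"
  proof (rule image_subsetI)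
    fix j
    show "(f ^^ (j * d)) x \<in> (\<lambda>j. (f ^^ (j * d)) x) ` {..<m div d}"
      using funpow_mult_mod_period[OF assms(1,2), of j] \<open>0 < m div d\<close>
      by (intro image_eqI[of _ _ "j mod (m div d)"]) simp_all
  qed
qed blast

lemma least_period_induced_range_mult:
  assumes x: "least_period f x m" and d: "d dvd m" "0 < d"
  shows "least_period (induced f) (range (\<lambda>j. (f ^^ (j * d)) x)) d"
proof -
  define R where "R j = (f ^^ (j * d)) x" for j
  define q where "q = m div d"
  have q_pos: "0 < q"
    using d least_period_pos[OF x] unfolding q_def by (simp add: div_greater_zero_iff dvd_imp_le)
  have R_mod: "R j = R (j mod q)" for j
    unfolding R_def q_def by (rule funpow_mult_mod_period[OF x d(1)])
  have shift: "(f ^^ (t * d)) (R j) = R (j + t)" for t j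
    unfolding R_def by (metis (no_types) add.commute add_mult_distrib comp_apply funpow_add)
  have "(f ^^ k) ` range R = range R \<longleftrightarrow> d dvd k" for k
  proof
    assume fixed: "(f ^^ k) ` range R = range R"
    have "R 0 \<in> (f ^^ k) ` range R"
      unfolding fixed by (rule rangeI)
    then obtain j where "(f ^^ k) (R j) = R 0"
      by (metis imageE rangeE)
    then have "(f ^^ (k + j * d)) x = x"
      unfolding R_def by (simp add: funpow_add)
    then have "m dvd k + j * d"
      using x unfolding least_period_iff by blast
    then have "d dvd k + j * d"
      using d(1) by (rule dvd_trans[rotated])
    then show "d dvd k"
      using dvd_add_left_iff[of d "j * d" k] by simp
  next
    assume "d dvd k"
    then obtain t where k: "k = t * d"
      by (metis dvd_def mult.commute)
    \<comment> \<open>\<open>(q - 1) * t + t\<close> steps of length \<open>d\<close> make up \<open>t\<close> full periods \<open>m = q * d\<close>.\<close>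
    have preimage: "R j = (f ^^ k) (R (j + (q - 1) * t))" for j
    proof -
      have index: "j + (q - 1) * t + t = j + t * q"
        using q_pos by (cases q) (simp_all add: algebra_simps)
      have "R (j + (q - 1) * t + t) = R j"
        unfolding index using R_mod[of j] R_mod[of "j + t * q"] by simp
      then show ?thesis
        unfolding k shift by simp
    qed
    show "(f ^^ k) ` range R = range R"
    proof
      show "(f ^^ k) ` range R \<subseteq> range R"
        unfolding k using shift by auto
      show "range R \<subseteq> (f ^^ k) ` range R"
        using preimage by blast
    qed
  qed
  then show ?thesis
    using d(2) unfolding R_def by (simp add: least_period_iff funpow_induced)
qed

lemma induced_least_period_realization_distinct:
  fixes f :: "'a \<Rightarrow> 'a" and D :: "nat \<Rightarrow> nat"
  assumes fX: "f ` X \<subseteq> X" and M: "finite M" "M \<noteq> {}" "M \<subseteq> Per f X"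
    and D: "\<And>\<mu>. \<mu> \<in> M \<Longrightarrow> D \<mu> dvd \<mu> \<and> 0 < D \<mu>"
  obtains C where "finite C" "C \<noteq> {}" "C \<subseteq> X" "card C \<le> (\<Sum>\<mu>\<in>M. \<mu> div D \<mu>)"
    "least_period (induced f) C (Lcm (D ` M))"
proof -
  define x where "x \<mu> = (SOME y. y \<in> X \<and> least_period f y \<mu>)" for \<mu>
  have "x \<mu> \<in> X \<and> least_period f (x \<mu>) \<mu>" if "\<mu> \<in> M" for \<mu>
    unfolding x_def by (rule someI_ex) (use M(3) that in \<open>auto simp: Per_def\<close>)
  then have x: "x \<mu> \<in> X" "least_period f (x \<mu>) \<mu>" if "\<mu> \<in> M" for \<mu>
    using that by simp_all
  define P where "P \<mu> = (\<lambda>j. (f ^^ (j * D \<mu>)) (x \<mu>)) ` {..<\<mu> div D \<mu>}" for \<mu>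
  define C where "C = (\<Union>\<mu>\<in>M. P \<mu>)"
  have P_range: "P \<mu> = range (\<lambda>j. (f ^^ (j * D \<mu>)) (x \<mu>))" if "\<mu> \<in> M" for \<mu>
    unfolding P_def using D[OF that] by (intro funpow_mult_image_eq_range[OF x(2)[OF that]]) simp_all
  have "least_period (induced f) C (Lcm (D ` M))"
    unfolding C_def
  proof (rule least_period_induced_UN[where Q = "\<lambda>\<mu>. orbit f (x \<mu>)"])
    show "cyclic_on f (orbit f (x \<mu>))" if "\<mu> \<in> M" for \<mu>
      using least_period_cyclic_on_orbit[OF x(2)[OF that]] .
    show "inj_on (\<lambda>\<mu>. orbit f (x \<mu>)) M"
      by (rule inj_onI) (metis card_orbit_least_period x(2))
    show "P \<mu> \<subseteq> orbit f (x \<mu>)" if "\<mu> \<in> M" for \<mu>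
      unfolding P_range[OF that]
      using funpow_in_orbit[OF least_period_self_in_orbit[OF x(2)[OF that]]] by blast
    show "least_period (induced f) (P \<mu>) (D \<mu>)" if "\<mu> \<in> M" for \<mu>
      unfolding P_range[OF that] using least_period_induced_range_mult[OF x(2)[OF that]] D[OF that] by blast
  qed (rule M(1))
  moreover have "card C \<le> (\<Sum>\<mu>\<in>M. \<mu> div D \<mu>)"
  proof -
    have "card C \<le> (\<Sum>\<mu>\<in>M. card (P \<mu>))"
      unfolding C_def using M(1) by (rule card_UN_le)
    also have "\<dots> \<le> (\<Sum>\<mu>\<in>M. \<mu> div D \<mu>)"
      unfolding P_def by (rule sum_mono, rule order_trans[OF card_image_le]) simp_all
    finally show ?thesis .
  qed
  moreover have "C \<noteq> {}"
  proof -
    obtain \<mu> where \<mu>: "\<mu> \<in> M"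
      using M(2) by blast
    moreover have "0 < \<mu>"
      using \<mu> M(3) Per_pos by blast
    ultimately have "0 < \<mu> div D \<mu>"
      using D[OF \<mu>] by (simp add: div_greater_zero_iff dvd_imp_le)
    then show ?thesis
      using \<mu> by (auto simp: C_def P_def)
  qed
  moreover have "C \<subseteq> X"
  proof -
    have "(f ^^ n) y \<in> X" if "y \<in> X" for n y
      using fX that by (induction n) auto
    then show ?thesis
      using x(1) by (auto simp: C_def P_def)
  qed
  moreover have "finite C"
    using M(1) by (simp add: C_def P_def)
  ultimately show ?thesis
    using that by blast
qed

lemma sum_div_Lcm_fibres_le:
  fixes d m :: "'i \<Rightarrow> nat"
  assumes "finite I" "\<And>i. i \<in> I \<Longrightarrow> d i dvd m i" "\<And>i. i \<in> I \<Longrightarrow> 0 < m i"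
  shows "(\<Sum>\<mu>\<in>m ` I. \<mu> div Lcm (d ` {i \<in> I. m i = \<mu>})) \<le> (\<Sum>i\<in>I. m i div d i)"
proof -
  have "(\<Sum>\<mu>\<in>m ` I. \<mu> div Lcm (d ` {i \<in> I. m i = \<mu>}))
      \<le> (\<Sum>\<mu>\<in>m ` I. \<Sum>i\<in>{i \<in> I. m i = \<mu>}. m i div d i)"
  proof (rule sum_mono)
    fix \<mu> assume "\<mu> \<in> m ` I"
    then obtain i where i: "i \<in> I" "m i = \<mu>"
      by blast
    let ?L = "Lcm (d ` {i \<in> I. m i = \<mu>})"
    have "?L dvd \<mu>"
      using assms(2) by (auto intro: Lcm_least)
    moreover have "0 < \<mu>"
      using i assms(3) by blast
    ultimately have "0 < ?L"
      by (rule dvd_pos_nat[rotated])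
    then have "d i \<le> ?L"
      using i by (intro dvd_imp_le) (auto intro: dvd_Lcm)
    moreover have "0 < d i"
      using dvd_pos_nat assms(2,3)[OF i(1)] by blast
    ultimately have "\<mu> div ?L \<le> m i div d i"
      using i(2) by (simp add: div_le_mono2)
    also have "\<dots> \<le> (\<Sum>i\<in>{i \<in> I. m i = \<mu>}. m i div d i)"
      using i assms(1) by (intro member_le_sum) auto
    finally show "\<mu> div ?L \<le> (\<Sum>i\<in>{i \<in> I. m i = \<mu>}. m i div d i)" .
  qed
  also have "\<dots> = (\<Sum>i\<in>I. m i div d i)"
    using assms(1) by (intro sum.group) auto
  finally show ?thesis .
qed

lemma Lcm_Lcm_fibres:
  fixes d :: "'i \<Rightarrow> 'a::semiring_Gcd"
  shows "Lcm ((\<lambda>\<mu>. Lcm (d ` {i \<in> I. m i = \<mu>})) ` m ` I) = Lcm (d ` I)"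
proof (rule associated_eqI)
  show "Lcm ((\<lambda>\<mu>. Lcm (d ` {i \<in> I. m i = \<mu>})) ` m ` I) dvd Lcm (d ` I)"
  proof (rule Lcm_least)
    fix a assume "a \<in> (\<lambda>\<mu>. Lcm (d ` {i \<in> I. m i = \<mu>})) ` m ` I"
    then obtain \<mu> where "a = Lcm (d ` {i \<in> I. m i = \<mu>})"
      by blast
    then show "a dvd Lcm (d ` I)"
      by (simp add: Lcm_subset image_mono)
  qed
  show "Lcm (d ` I) dvd Lcm ((\<lambda>\<mu>. Lcm (d ` {i \<in> I. m i = \<mu>})) ` m ` I)"
  proof (rule Lcm_least)
    fix a assume "a \<in> d ` I"
    then obtain i where i: "i \<in> I" "a = d i"
      by blast
    have "d i dvd Lcm (d ` {j \<in> I. m j = m i})"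
      by (rule dvd_Lcm) (use i(1) in blast)
    also have "\<dots> dvd Lcm ((\<lambda>\<mu>. Lcm (d ` {i \<in> I. m i = \<mu>})) ` m ` I)"
      using i(1) by (rule dvd_Lcm[OF imageI, OF imageI])
    finally show "a dvd Lcm ((\<lambda>\<mu>. Lcm (d ` {i \<in> I. m i = \<mu>})) ` m ` I)"
      using i(2) by simp
  qed
qed simp_all

lemma induced_least_period_realization:
  fixes f :: "'a \<Rightarrow> 'a" and d m :: "'i \<Rightarrow> nat"
  assumes fX: "f ` X \<subseteq> X" and I: "finite I" "I \<noteq> {}"
    and dm: "\<And>i. i \<in> I \<Longrightarrow> d i dvd m i \<and> m i \<in> Per f X"
  obtains C where "finite C" "C \<noteq> {}" "C \<subseteq> X" "card C \<le> (\<Sum>i\<in>I. m i div d i)"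
    "least_period (induced f) C (Lcm (d ` I))"
proof -
  define D where "D \<mu> = Lcm (d ` {i \<in> I. m i = \<mu>})" for \<mu>
  have m_pos: "0 < m i" if "i \<in> I" for i
    using dm[OF that] Per_pos by blast
  have D_dvd_pos: "D \<mu> dvd \<mu> \<and> 0 < D \<mu>" if \<mu>: "\<mu> \<in> m ` I" for \<mu>
  proof -
    obtain i where i: "i \<in> I" "\<mu> = m i"
      using \<mu> by blast
    have "D \<mu> dvd \<mu>"
      unfolding D_def using dm by (auto intro: Lcm_least)
    then show ?thesis
      using dvd_pos_nat[OF m_pos[OF i(1)]] i(2) by simp
  qed
  have "m ` I \<subseteq> Per f X"
    using dm by blast
  obtain C where C: "finite C" "C \<noteq> {}" "C \<subseteq> X" "card C \<le> (\<Sum>\<mu>\<in>m ` I. \<mu> div D \<mu>)"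
    "least_period (induced f) C (Lcm (D ` m ` I))"
    by (rule induced_least_period_realization_distinct[OF fX finite_imageI[OF I(1)] _
          \<open>m ` I \<subseteq> Per f X\<close> D_dvd_pos])
      (use I(2) in auto)
  have "(\<Sum>\<mu>\<in>m ` I. \<mu> div D \<mu>) \<le> (\<Sum>i\<in>I. m i div d i)"
    unfolding D_def by (rule sum_div_Lcm_fibres_le[OF I(1)]) (simp_all add: dm m_pos)
  moreover have "Lcm (D ` m ` I) = Lcm (d ` I)"
    unfolding D_def by (rule Lcm_Lcm_fibres)
  ultimately show ?thesis
    using that[OF C(1-3)] C(4,5) by simp
qed

lemma induced_least_period_decomposition_lists:
  fixes f :: "'a \<Rightarrow> 'a"
  assumes "finite C" "C \<noteq> {}" "C \<subseteq> X" "least_period (induced f) C p"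
  obtains ds ms where "p = Lcm (set ds)" "1 \<le> length ds" "length ds \<le> card C" "length ms = length ds"
    "\<forall>i<length ds. ds ! i dvd ms ! i \<and> ms ! i \<in> Per f X"
    "(\<Sum>i<length ds. ms ! i div ds ! i) \<le> card C"
proof -
  obtain \<O> :: "'a set set" and d where \<O>: "finite \<O>" "\<O> \<noteq> {}" "card \<O> \<le> card C"
    "p = Lcm (d ` \<O>)" "\<And>B. B \<in> \<O> \<Longrightarrow> d B dvd card B \<and> card B \<in> Per f X"
    "(\<Sum>B\<in>\<O>. card B div d B) \<le> card C"
    using induced_least_period_decomposition[OF assms] by blast
  obtain e where e: "bij_betw e {..<card \<O>} \<O>"
    using ex_bij_betw_nat_finite[OF \<O>(1)] by (auto simp: atLeast0LessThan)
  define ds where "ds = map (d \<circ> e) [0..<card \<O>]"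
  define ms where "ms = map (card \<circ> e) [0..<card \<O>]"
  have "set ds = d ` e ` {..<card \<O>}"
    by (simp add: ds_def atLeast0LessThan image_comp)
  also have "\<dots> = d ` \<O>"
    using bij_betw_imp_surj_on[OF e] by simp
  finally have "set ds = d ` \<O>" .
  show ?thesis
  proof (rule that)
    show "p = Lcm (set ds)"
      using \<O>(4) \<open>set ds = d ` \<O>\<close> by simp
    have "(\<Sum>i<length ds. ms ! i div ds ! i) = (\<Sum>B\<in>\<O>. card B div d B)"
      using sum.reindex_bij_betw[OF e, of "\<lambda>B. card B div d B"] by (simp add: ds_def ms_def)
    then show "(\<Sum>i<length ds. ms ! i div ds ! i) \<le> card C"
      using \<O>(6) by simp
    show "\<forall>i<length ds. ds ! i dvd ms ! i \<and> ms ! i \<in> Per f X"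
      using \<O>(5) bij_betwE[OF e] by (simp add: ds_def ms_def)
    show "1 \<le> length ds" "length ds \<le> card C" "length ms = length ds"
      using \<O>(1-3) by (simp_all add: ds_def ms_def Suc_le_eq card_gt_0_iff)
  qed
qed

lemma induced_least_period_realization_lists:
  fixes f :: "'a \<Rightarrow> 'a"
  assumes "f ` X \<subseteq> X" "1 \<le> length ds" "length ms = length ds"
    "\<forall>i<length ds. ds ! i dvd ms ! i \<and> ms ! i \<in> Per f X"
  obtains C where "finite C" "C \<noteq> {}" "C \<subseteq> X" "card C \<le> (\<Sum>i<length ds. ms ! i div ds ! i)"
    "least_period (induced f) C (Lcm (set ds))"
proof -
  have "{..<length ds} \<noteq> {}"
    using assms(2) by (auto simp: lessThan_empty_iff)
  then obtain C where "finite C" "C \<noteq> {}" "C \<subseteq> X"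
    "card C \<le> (\<Sum>i<length ds. ms ! i div ds ! i)"
    "least_period (induced f) C (Lcm ((!) ds ` {..<length ds}))"
    by (rule induced_least_period_realization[OF assms(1) finite_lessThan, where d = "(!) ds" and m = "(!) ms"])
      (use assms(4) in auto)
  moreover have "(!) ds ` {..<length ds} = set ds"
    by (simp add: atLeast0LessThan[symmetric] nth_image)
  ultimately show ?thesis
    using that by simp
qed

lemma Per_induced_Fn:
  fixes f :: "'a \<Rightarrow> 'a"
  assumes "f ` X \<subseteq> X"
  shows "Per (induced f) (Fn X n) =
           {Lcm (set ds) | ds ms l. 1 \<le> l \<and> l \<le> n \<and> length ds = l \<and> length ms = l \<and>
              (\<forall>i<l. ds ! i dvd ms ! i \<and> ms ! i \<in> Per f X) \<and>
              (\<Sum>i<l. ms ! i div ds ! i) \<le> n}"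
proof (intro set_eqI iffI)
  fix p assume "p \<in> Per (induced f) (Fn X n)"
  then obtain C where C: "finite C" "C \<noteq> {}" "C \<subseteq> X" "card C \<le> n"
    and p: "least_period (induced f) C p"
    by (auto simp: Per_def Fn_def)
  obtain ds ms where "p = Lcm (set ds)" "1 \<le> length ds" "length ds \<le> card C" "length ms = length ds"
    "\<forall>i<length ds. ds ! i dvd ms ! i \<and> ms ! i \<in> Per f X"
    "(\<Sum>i<length ds. ms ! i div ds ! i) \<le> card C"
    by (rule induced_least_period_decomposition_lists[OF C(1-3) p])
  then show "p \<in> {Lcm (set ds) | ds ms l. 1 \<le> l \<and> l \<le> n \<and> length ds = l \<and> length ms = l \<and>
              (\<forall>i<l. ds ! i dvd ms ! i \<and> ms ! i \<in> Per f X) \<and>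
              (\<Sum>i<l. ms ! i div ds ! i) \<le> n}"
    using C(4) by (intro CollectI exI[of _ ds] exI[of _ ms] exI[of _ "length ds"]) simp
next
  fix p assume "p \<in> {Lcm (set ds) | ds ms l. 1 \<le> l \<and> l \<le> n \<and> length ds = l \<and> length ms = l \<and>
              (\<forall>i<l. ds ! i dvd ms ! i \<and> ms ! i \<in> Per f X) \<and>
              (\<Sum>i<l. ms ! i div ds ! i) \<le> n}"
  then obtain ds ms where ds: "p = Lcm (set ds)" "1 \<le> length ds" "length ms = length ds"
    "\<forall>i<length ds. ds ! i dvd ms ! i \<and> ms ! i \<in> Per f X"
    "(\<Sum>i<length ds. ms ! i div ds ! i) \<le> n"
    by auto
  obtain C where C: "finite C" "C \<noteq> {}" "C \<subseteq> X" "card C \<le> (\<Sum>i<length ds. ms ! i div ds ! i)"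
    and p: "least_period (induced f) C (Lcm (set ds))"
    by (rule induced_least_period_realization_lists[OF assms ds(2-4)])
  have "C \<in> Fn X n"
    using C ds(5) unfolding Fn_def by simp
  then show "p \<in> Per (induced f) (Fn X n)"
    using p ds(1) unfolding Per_def by blast
qed

lemma Per_induced_Ffin:
  fixes f :: "'a \<Rightarrow> 'a"
  assumes "f ` X \<subseteq> X"
  shows "Per (induced f) (Ffin X) =
           {Lcm (set ds) | ds ms l. 1 \<le> l \<and> length ds = l \<and> length ms = l \<and>
              (\<forall>i<l. ds ! i dvd ms ! i \<and> ms ! i \<in> Per f X)}"
proof (intro set_eqI iffI)
  fix p assume "p \<in> Per (induced f) (Ffin X)"
  then obtain C where C: "finite C" "C \<noteq> {}" "C \<subseteq> X" and p: "least_period (induced f) C p"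
    by (auto simp: Per_def Ffin_def)
  obtain ds ms where "p = Lcm (set ds)" "1 \<le> length ds" "length ms = length ds"
    "\<forall>i<length ds. ds ! i dvd ms ! i \<and> ms ! i \<in> Per f X"
    by (rule induced_least_period_decomposition_lists[OF C p])
  then show "p \<in> {Lcm (set ds) | ds ms l. 1 \<le> l \<and> length ds = l \<and> length ms = l \<and>
              (\<forall>i<l. ds ! i dvd ms ! i \<and> ms ! i \<in> Per f X)}"
    by (intro CollectI exI[of _ ds] exI[of _ ms] exI[of _ "length ds"]) simp
next
  fix p assume "p \<in> {Lcm (set ds) | ds ms l. 1 \<le> l \<and> length ds = l \<and> length ms = l \<and>
              (\<forall>i<l. ds ! i dvd ms ! i \<and> ms ! i \<in> Per f X)}"
  then obtain ds ms where ds: "p = Lcm (set ds)" "1 \<le> length ds" "length ms = length ds"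
    "\<forall>i<length ds. ds ! i dvd ms ! i \<and> ms ! i \<in> Per f X"
    by auto
  obtain C where C: "finite C" "C \<noteq> {}" "C \<subseteq> X"
    and p: "least_period (induced f) C (Lcm (set ds))"
    by (rule induced_least_period_realization_lists[OF assms ds(2-4)])
  have "C \<in> Ffin X"
    using C unfolding Ffin_def by simp
  then show "p \<in> Per (induced f) (Ffin X)"
    using p ds(1) unfolding Per_def by blast
qed

theorem proposition8p1:
  fixes X :: "'a::metric_space set" and f :: "'a \<Rightarrow> 'a" and n :: nat
  assumes "compact X" and "continuous_on X f" and "f ` X \<subseteq> X"
  shows "Per (map f) (prod_space X n) =
           {Lcm (set ms) | ms. length ms = n \<and> set ms \<subseteq> Per f X}
     \<and> Per (induced f) (Fn X n) =
           {Lcm (set ds) | ds ms l. 1 \<le> l \<and> l \<le> n \<and> length ds = l \<and> length ms = l \<and>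
              (\<forall>i<l. ds ! i dvd ms ! i \<and> ms ! i \<in> Per f X) \<and>
              (\<Sum>i<l. ms ! i div ds ! i) \<le> n}
     \<and> Per (induced f) (Ffin X) =
           {Lcm (set ds) | ds ms l. 1 \<le> l \<and> length ds = l \<and> length ms = l \<and>
              (\<forall>i<l. ds ! i dvd ms ! i \<and> ms ! i \<in> Per f X)}"
  by (intro conjI Per_map_prod_space Per_induced_Fn Per_induced_Ffin assms(3))

end
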